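(* \[ f\left(n,24,\binom{24}{2} - 15\right) = \Omega\left(n^{9/8}\right). \]
   Context: For positive integers $n,k,\ell$, $f(n,k,\ell)$ denotes the minimum number of colors $|C|$ in a coloring $\chi:E\to C$ of the edges of the complete graph $K_n=(V,E)$ such that every set of $k$ vertices of $V$ spans (in the induced complete subgraph $K_k$) edges of at least $\ell$ distinct colors. The asymptotic notation refers to $n\to\infty$. *)

theory Defs
  imports "HOL-Analysis.Analysis" "HOL-Library.Landau_Symbols"
begin

definition edges_of :: "nat set \<Rightarrow> nat set set" where
  "edges_of V = {e. e \<subseteq> V \<and> card e = 2}"

definition good_colouring :: "nat \<Rightarrow> nat \<Rightarrow> nat \<Rightarrow> (nat set \<Rightarrow> nat) \<Rightarrow> bool" where
  "good_colouring n k l chi \<longleftrightarrow>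
     (\<forall>S. S \<subseteq> {..<n} \<and> card S = k \<longrightarrow> card (chi ` edges_of S) \<ge> l)"

text \<open>f(n,k,l): minimum number of colours used by such a colouring.
 (Colours are taken to be natural numbers w.l.o.g.; the number of colours is the size of the
 image of the edge set.)\<close>
definition f :: "nat \<Rightarrow> nat \<Rightarrow> nat \<Rightarrow> nat" where
  "f n k l = (LEAST c. \<exists>chi. good_colouring n k l chi \<and> card (chi ` edges_of {..<n}) = c)"

end

theory Submission
  imports Defs "HOL-Real_Asymp.Real_Asymp"
begin

(* If every k vertices span at least (k choose 2) - q colours, then no set of at most k vertices
   carries more than q repeated colours. Hence every colour class has maximum degree at most
   q + 1, every vertex sees at least (n - 1)/(q + 1) colours, and by double counting some colour c
   is seen by a set W of at least n(n - 1)/((q + 1) m) vertices, m being the number of colours.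
   Inside W every other colour has only O(1) edges: otherwise there are t disjoint edges of that
   colour whose 2t endpoints have their c-coloured partners outside them, giving 3t edges of two
   colours on at most 4t <= k vertices, i.e. more than q repeats once 3t >= q + 3. Counting the
   edges inside W gives |W|^2 = O(m), hence n^4 = O(m^3): the number of colours is
   Omega(n^(4/3)), which for k = 24, q = 15 and t = 6 exceeds n^(9/8). *)

lemma finite_edges_of: "finite S \<Longrightarrow> finite (edges_of S)"
  unfolding edges_of_def by (rule finite_subset[of _ "Pow S"]) auto

lemma card_edges_of: "finite S \<Longrightarrow> card (edges_of S) = card S choose 2"
  unfolding edges_of_def by (rule n_subsets)

lemma edges_of_mono: "S \<subseteq> T \<Longrightarrow> edges_of S \<subseteq> edges_of T"
  by (auto simp: edges_of_def)

lemma doubleton_in_edges_of: "x \<in> S \<Longrightarrow> y \<in> S \<Longrightarrow> x \<noteq> y \<Longrightarrow> {x, y} \<in> edges_of S"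
  by (simp add: edges_of_def)

lemma in_edges_ofE:
  assumes "e \<in> edges_of S" "x \<in> e"
  obtains y where "y \<in> S" "y \<noteq> x" "e = {x, y}"
  using assms unfolding edges_of_def card_2_iff by auto

lemma obtain_subset_between_with_card:
  assumes "finite V" "T \<subseteq> V" "card T \<le> k" "k \<le> card V"
  obtains S where "T \<subseteq> S" "S \<subseteq> V" "card S = k"
proof -
  have "finite T" using assms(1,2) finite_subset by blast
  have "k - card T \<le> card (V - T)" using assms by (simp add: card_Diff_subset[OF \<open>finite T\<close>])
  then obtain R where R: "R \<subseteq> V - T" "card R = k - card T"
    by (meson obtain_subset_with_card_n)
  then have "card (T \<union> R) = k"
    using assms(1,3) \<open>finite T\<close> finite_subset by (subst card_Un_disjoint) auto
  with R assms(2) show ?thesis by (intro that[of "T \<union> R"]) auto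
qed

lemma good_colouring_set_encode:
  assumes "l \<le> k choose 2"
  shows "good_colouring n k l set_encode"
  unfolding good_colouring_def
proof (intro allI impI)
  fix S assume S: "S \<subseteq> {..<n} \<and> card S = k"
  then have "finite S" using finite_subset by blast
  have "inj_on set_encode (edges_of S)"
    using inj_on_set_encode by (rule inj_on_subset) (auto simp: edges_of_def intro: card_ge_0_finite)
  then have "card (set_encode ` edges_of S) = k choose 2"
    using S \<open>finite S\<close> by (simp add: card_image card_edges_of)
  with assms show "l \<le> card (set_encode ` edges_of S)" by simp
qed

lemma f_attained:
  assumes "good_colouring n k l chi0"
  obtains chi where "good_colouring n k l chi" "card (chi ` edges_of {..<n}) = f n k l"
proof -
  have "\<exists>c chi. good_colouring n k l chi \<and> card (chi ` edges_of {..<n}) = c"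
    using assms by blast
  from LeastI_ex[OF this] show ?thesis
    using that unfolding f_def by blast
qed

lemma exists_independent_subset:
  assumes "finite A" "\<And>a b. R a b \<Longrightarrow> R b a" "\<And>a. a \<in> A \<Longrightarrow> card {b\<in>A. R a b} \<le> B"
    "j * (B + 1) \<le> card A"
  shows "\<exists>T\<subseteq>A. card T = j \<and> pairwise (\<lambda>a b. \<not> R a b) T"
  using assms(1,3,4)
proof (induction j arbitrary: A)
  case 0
  show ?case by (intro exI[of _ "{}"]) auto
next
  case (Suc j)
  then obtain a where a: "a \<in> A" by fastforce
  define X where "X = insert a {b\<in>A. R a b}"
  define A' where "A' = A - X"
  have "X \<subseteq> A" "finite A'" using a Suc.prems(1) unfolding X_def A'_def by auto
  have "card X \<le> B + 1"
    using Suc.prems(1) Suc.prems(2)[OF a] unfolding X_def by (simp add: card_insert_if)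
  then have "j * (B + 1) \<le> card A'"
    using Suc.prems(1,3) \<open>X \<subseteq> A\<close> unfolding A'_def by (simp add: card_Diff_subset finite_subset)
  moreover have "card {b\<in>A'. R c b} \<le> B" if "c \<in> A'" for c
  proof -
    have "card {b\<in>A'. R c b} \<le> card {b\<in>A. R c b}"
      using Suc.prems(1) by (intro card_mono) (auto simp: A'_def)
    with Suc.prems(2)[of c] that show ?thesis unfolding A'_def by simp
  qed
  ultimately obtain T where T: "T \<subseteq> A'" "card T = j" "pairwise (\<lambda>a b. \<not> R a b) T"
    using Suc.IH[OF \<open>finite A'\<close>] by blast
  have "a \<notin> T" "finite T" "\<forall>b\<in>T. \<not> R a b"
    using T(1) \<open>finite A'\<close> finite_subset unfolding A'_def X_def by auto
  with T a assms(2) show ?case unfolding A'_def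
    by (intro exI[of _ "insert a T"]) (auto simp: pairwise_insert)
qed

lemma square_le_of_square_le_linear:
  fixes w b c m :: nat
  assumes "w\<^sup>2 \<le> b * m + c * w" "1 \<le> m"
  shows "w\<^sup>2 \<le> (2 * b + c\<^sup>2) * m"
proof -
  have "2 * (c * w) \<le> c\<^sup>2 + w\<^sup>2"
  proof -
    have "int (2 * (c * w)) \<le> int (c\<^sup>2 + w\<^sup>2)"
      using sum_squares_ge_zero[of "int c - int w" 0] by (simp add: power2_eq_square algebra_simps)
    then show ?thesis by linarith
  qed
  then have "w\<^sup>2 \<le> 2 * b * m + c\<^sup>2" using assms(1) by linarith
  also have "\<dots> \<le> 2 * b * m + c\<^sup>2 * m" using assms(2) by simp
  finally show ?thesis by (simp add: algebra_simps)
qed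

lemma fourth_power_le_cube:
  fixes N M w a b c :: nat
  assumes "N * (N - 1) \<le> a * M * w" "w choose 2 \<le> b * M + c * w" "2 \<le> N" "1 \<le> M"
  shows "N ^ 4 \<le> 4 * a\<^sup>2 * (4 * b + (2 * c + 1)\<^sup>2) * M ^ 3"
proof -
  have "N \<le> 2 * (N - 1)" using assms(3) by simp
  then have "N\<^sup>2 \<le> 2 * (N * (N - 1))" unfolding power2_eq_square by (metis mult.left_commute mult_le_mono2)
  also have "\<dots> \<le> 2 * a * M * w" using assms(1) by simp
  finally have N2: "N\<^sup>2 \<le> 2 * a * M * w" .
  have "w\<^sup>2 = 2 * (w choose 2) + w" by (simp add: choose_two power2_eq_square algebra_simps)
  then have "w\<^sup>2 \<le> (2 * b) * M + (2 * c + 1) * w" using assms(2) by (simp add: algebra_simps)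
  then have w2: "w\<^sup>2 \<le> (4 * b + (2 * c + 1)\<^sup>2) * M"
    using square_le_of_square_le_linear[OF _ assms(4)] by fastforce
  have "N ^ 4 = (N\<^sup>2)\<^sup>2" by simp
  also have "\<dots> \<le> (2 * a * M * w)\<^sup>2" using N2 by (rule power_mono) simp
  also have "\<dots> = 4 * a\<^sup>2 * M\<^sup>2 * w\<^sup>2" by (simp add: power_mult_distrib)
  also have "\<dots> \<le> 4 * a\<^sup>2 * M\<^sup>2 * ((4 * b + (2 * c + 1)\<^sup>2) * M)" using w2 by simp
  also have "\<dots> = 4 * a\<^sup>2 * (4 * b + (2 * c + 1)\<^sup>2) * M ^ 3"
    by (simp add: power2_eq_square power3_eq_cube algebra_simps)
  finally show ?thesis .
qed

locale few_repeats_colouring =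
  fixes n k q :: nat and chi :: "nat set \<Rightarrow> nat"
  assumes good: "good_colouring n k ((k choose 2) - q) chi"
    and k_le_n: "k \<le> n"
begin

lemma card_le_card_image_add:
  assumes "S \<subseteq> {..<n}" "card S \<le> k" "E \<subseteq> edges_of S"
  shows "card E \<le> card (chi ` E) + q"
proof -
  obtain S' where S': "S \<subseteq> S'" "S' \<subseteq> {..<n}" "card S' = k"
    using obtain_subset_between_with_card[of "{..<n}" S k] assms k_le_n by auto
  have "finite S'" using S'(2) finite_subset by blast
  then have fin: "finite (edges_of S')" and card_S': "card (edges_of S') = k choose 2"
    using S'(3) by (simp_all add: finite_edges_of card_edges_of)
  have E: "E \<subseteq> edges_of S'" using assms(3) edges_of_mono[OF S'(1)] by blast
  have "(k choose 2) - q \<le> card (chi ` edges_of S')"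
    using good S' unfolding good_colouring_def by blast
  also have "chi ` edges_of S' = chi ` (edges_of S' - E) \<union> chi ` E" using E by blast
  also have "card \<dots> \<le> card (chi ` (edges_of S' - E)) + card (chi ` E)"
    by (rule card_Un_le)
  also have "card (chi ` (edges_of S' - E)) \<le> card (edges_of S' - E)"
    using fin by (simp add: card_image_le)
  also have "card (edges_of S' - E) = (k choose 2) - card E"
    using E fin card_S' by (simp add: card_Diff_subset finite_subset)
  finally have "(k choose 2) - q \<le> (k choose 2) - card E + card (chi ` E)"
    by simp
  moreover have "card E \<le> k choose 2" using card_mono[OF fin E] card_S' by simp
  ultimately show ?thesis by linarith
qed

definition colour_nbhd :: "nat \<Rightarrow> nat \<Rightarrow> nat set" where
  "colour_nbhd x a = {y\<in>{..<n}. y \<noteq> x \<and> chi {x, y} = a}"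

lemma finite_colour_nbhd [simp]: "finite (colour_nbhd x a)"
  by (simp add: colour_nbhd_def)

lemma card_colour_nbhd_le:
  assumes "q + 3 \<le> k" "x < n"
  shows "card (colour_nbhd x a) \<le> q + 1"
proof (rule ccontr)
  assume "\<not> ?thesis"
  then have "q + 2 \<le> card (colour_nbhd x a)" by simp
  then obtain N where N: "N \<subseteq> colour_nbhd x a" "card N = q + 2"
    by (rule obtain_subset_with_card_n)
  define E where "E = (\<lambda>y. {x, y}) ` N"
  have "x \<notin> N" "N \<subseteq> {..<n}" using N(1) by (auto simp: colour_nbhd_def)
  then have "card E = q + 2"
    using N(2) unfolding E_def by (subst card_image) (auto simp: inj_on_def doubleton_eq_iff)
  moreover have "chi ` E \<subseteq> {a}" using N(1) by (auto simp: E_def colour_nbhd_def)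
  then have "card (chi ` E) \<le> 1" using card_mono[of "{a}"] by fastforce
  moreover have "E \<subseteq> edges_of (insert x N)"
    using \<open>x \<notin> N\<close> unfolding E_def by (auto intro!: doubleton_in_edges_of)
  then have "card E \<le> card (chi ` E) + q"
    using \<open>x \<notin> N\<close> \<open>N \<subseteq> {..<n}\<close> assms N(2)
    by (intro card_le_card_image_add[of "insert x N"]) (auto simp: card_insert_if finite_subset)
  ultimately show False by linarith
qed

definition incident_edges :: "nat \<Rightarrow> nat \<Rightarrow> nat set set" where
  "incident_edges x a = {e\<in>edges_of {..<n}. chi e = a \<and> x \<in> e}"

lemma finite_incident_edges [simp]: "finite (incident_edges x a)"
  unfolding incident_edges_def by (simp add: finite_edges_of)

lemma card_incident_edges_le:
  assumes "q + 3 \<le> k" "x < n"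
  shows "card (incident_edges x a) \<le> q + 1"
proof -
  have "incident_edges x a \<subseteq> (\<lambda>y. {x, y}) ` colour_nbhd x a"
    by (auto simp: incident_edges_def colour_nbhd_def elim!: in_edges_ofE)
  then have "card (incident_edges x a) \<le> card ((\<lambda>y. {x, y}) ` colour_nbhd x a)"
    by (intro card_mono) auto
  also have "\<dots> \<le> card (colour_nbhd x a)"
    by (rule card_image_le) simp
  also have "\<dots> \<le> q + 1"
    by (rule card_colour_nbhd_le[OF assms])
  finally show ?thesis .
qed

definition colours :: "nat set" where
  "colours = chi ` edges_of {..<n}"

definition colours_at :: "nat \<Rightarrow> nat set" where
  "colours_at x = (\<lambda>y. chi {x, y}) ` ({..<n} - {x})"

definition vertices_seeing :: "nat \<Rightarrow> nat set" where
  "vertices_seeing c = {x\<in>{..<n}. c \<in> colours_at x}"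

lemma finite_colours [simp]: "finite colours"
  unfolding colours_def by (simp add: finite_edges_of)

lemma colours_at_subset: "x < n \<Longrightarrow> colours_at x \<subseteq> colours"
  unfolding colours_at_def colours_def by (auto intro!: imageI doubleton_in_edges_of)

lemma vertices_seeing_subset: "vertices_seeing c \<subseteq> {..<n}"
  unfolding vertices_seeing_def by auto

lemma card_colours_at_ge:
  assumes "q + 3 \<le> k" "x < n"
  shows "n - 1 \<le> (q + 1) * card (colours_at x)"
proof -
  have fin: "finite (colours_at x)" by (simp add: colours_at_def)
  have "{..<n} - {x} \<subseteq> (\<Union>a\<in>colours_at x. colour_nbhd x a)"
    unfolding colours_at_def colour_nbhd_def by auto
  then have "card ({..<n} - {x}) \<le> card (\<Union>a\<in>colours_at x. colour_nbhd x a)"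
    using fin by (intro card_mono) auto
  also have "\<dots> \<le> (\<Sum>a\<in>colours_at x. card (colour_nbhd x a))"
    by (rule card_UN_le[OF fin])
  also have "\<dots> \<le> (\<Sum>a\<in>colours_at x. q + 1)"
    by (intro sum_mono card_colour_nbhd_le assms)
  finally show ?thesis using assms(2) by (simp add: mult.commute)
qed

lemma sum_card_colours_at:
  "(\<Sum>x<n. card (colours_at x)) = (\<Sum>c\<in>colours. card (vertices_seeing c))"
proof -
  have "(\<Sum>x<n. card (colours_at x)) = card (SIGMA x:{..<n}. colours_at x)"
    by (simp add: card_SigmaI colours_at_def)
  also have "(SIGMA x:{..<n}. colours_at x) = prod.swap ` (SIGMA c:colours. vertices_seeing c)"
    using colours_at_subset unfolding vertices_seeing_def by force
  also have "card \<dots> = (\<Sum>c\<in>colours. card (vertices_seeing c))"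
    by (simp add: card_image card_SigmaI vertices_seeing_def)
  finally show ?thesis .
qed

lemma obtain_popular_colour:
  assumes "q + 3 \<le> k"
  obtains c where "c \<in> colours" "n * (n - 1) \<le> (q + 1) * card colours * card (vertices_seeing c)"
proof -
  have "{0, 1} \<in> edges_of {..<n}"
    using k_le_n assms by (intro doubleton_in_edges_of) auto
  then have "colours \<noteq> {}" unfolding colours_def by blast
  have "\<exists>c\<in>colours. n * (n - 1) \<le> (q + 1) * card colours * card (vertices_seeing c)"
  proof (rule ccontr)
    assume "\<not> ?thesis"
    then have less: "(q + 1) * card colours * card (vertices_seeing c) < n * (n - 1)"
      if "c \<in> colours" for c
      using that by auto
    have "n * (n - 1) = (\<Sum>x<n. n - 1)" by simp
    also have "\<dots> \<le> (\<Sum>x<n. (q + 1) * card (colours_at x))"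
      using card_colours_at_ge[OF assms] by (intro sum_mono) simp
    also have "\<dots> = (q + 1) * (\<Sum>c\<in>colours. card (vertices_seeing c))"
      by (simp only: sum_distrib_left[symmetric] sum_card_colours_at)
    finally have "card colours * (n * (n - 1))
        \<le> card colours * ((q + 1) * (\<Sum>c\<in>colours. card (vertices_seeing c)))"
      by (rule mult_le_mono2)
    also have "\<dots> = (\<Sum>c\<in>colours. (q + 1) * card colours * card (vertices_seeing c))"
      by (simp only: sum_distrib_left mult_ac)
    also have "\<dots> < (\<Sum>c\<in>colours. n * (n - 1))"
      using less \<open>colours \<noteq> {}\<close> by (intro sum_strict_mono) auto
    finally show False by (simp add: mult.commute)
  qed
  then show ?thesis using that by blast
qed

definition partnered_matching :: "nat set set \<Rightarrow> nat \<Rightarrow> nat \<Rightarrow> (nat \<Rightarrow> nat) \<Rightarrow> bool" where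
  "partnered_matching T c0 c1 p \<longleftrightarrow>
     T \<subseteq> edges_of {..<n} \<and> pairwise disjnt T \<and> chi ` T \<subseteq> {c0} \<and>
     (\<forall>u\<in>\<Union>T. p u < n \<and> p u \<notin> \<Union>T \<and> chi {u, p u} = c1)"

lemma partnered_matching_card_le:
  assumes "partnered_matching T c0 c1 p" "4 * card T \<le> k"
  shows "3 * card T \<le> q + 2"
proof -
  define U where "U = \<Union>T"
  define E where "E = (\<lambda>u. {u, p u}) ` U"
  define S where "S = U \<union> p ` U"
  have T: "T \<subseteq> edges_of {..<n}" "pairwise disjnt T" "chi ` T \<subseteq> {c0}"
    and partner: "\<And>u. u \<in> U \<Longrightarrow> p u < n \<and> p u \<notin> U \<and> chi {u, p u} = c1"
    using assms(1) unfolding partnered_matching_def U_def by blast+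
  have "finite T" using T(1) finite_subset finite_edges_of by blast
  have card_e: "card e = 2" if "e \<in> T" for e
    using T(1) that by (auto simp: edges_of_def)
  then have "card U = 2 * card T"
    using T(2) \<open>finite T\<close> unfolding U_def
    by (subst card_Union_disjoint) (auto intro: card_ge_0_finite)
  have "U \<subseteq> {..<n}" using T(1) unfolding U_def by (auto simp: edges_of_def)
  then have "finite U" using finite_subset by blast
  have "inj_on (\<lambda>u. {u, p u}) U"
    using partner by (auto simp: inj_on_def doubleton_eq_iff)
  then have "card E = card U" unfolding E_def by (rule card_image)
  have "T \<inter> E = {}" using partner unfolding E_def U_def by blast
  then have card_TE: "card (T \<union> E) = 3 * card T"
    using \<open>finite T\<close> \<open>finite U\<close> \<open>card E = card U\<close> \<open>card U = 2 * card T\<close>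
    by (simp add: card_Un_disjoint E_def)
  have "card S \<le> card U + card (p ` U)" unfolding S_def by (rule card_Un_le)
  also have "\<dots> \<le> 2 * card U" using card_image_le[OF \<open>finite U\<close>, of p] by simp
  finally have "card S \<le> k" using assms(2) \<open>card U = 2 * card T\<close> by simp
  moreover have "S \<subseteq> {..<n}" using partner \<open>U \<subseteq> {..<n}\<close> unfolding S_def by auto
  moreover have "T \<union> E \<subseteq> edges_of S"
  proof -
    have "T \<subseteq> edges_of U" using card_e unfolding U_def edges_of_def by blast
    then have "T \<subseteq> edges_of S" using edges_of_mono[of U S] unfolding S_def by blast
    moreover have "u \<noteq> p u" if "u \<in> U" for u using partner[OF that] that by auto
    then have "E \<subseteq> edges_of S"
      unfolding E_def S_def by (intro image_subsetI doubleton_in_edges_of) auto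
    ultimately show ?thesis by blast
  qed
  ultimately have "card (T \<union> E) \<le> card (chi ` (T \<union> E)) + q"
    using card_le_card_image_add by blast
  moreover have "chi ` (T \<union> E) \<subseteq> {c0, c1}" using T(3) partner unfolding E_def by auto
  then have "card (chi ` (T \<union> E)) \<le> card {c0, c1}" by (intro card_mono) auto
  also have "\<dots> \<le> 2" by (simp add: card_insert_if)
  ultimately show ?thesis using card_TE by linarith
qed

definition partner :: "nat \<Rightarrow> nat \<Rightarrow> nat" where
  "partner c x = (SOME y. y < n \<and> y \<noteq> x \<and> chi {x, y} = c)"

lemma partner:
  assumes "x \<in> vertices_seeing c"
  shows "partner c x < n" "partner c x \<noteq> x" "chi {x, partner c x} = c"
proof -
  have "\<exists>y. y < n \<and> y \<noteq> x \<and> chi {x, y} = c"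
    using assms unfolding vertices_seeing_def colours_at_def by auto
  from someI_ex[OF this] show "partner c x < n" "partner c x \<noteq> x" "chi {x, partner c x} = c"
    unfolding partner_def by auto
qed

definition with_partners :: "nat \<Rightarrow> nat set \<Rightarrow> nat set" where
  "with_partners c e = e \<union> partner c ` e"

lemma card_with_partners_containing_le:
  assumes "q + 3 \<le> k" "z < n" "A \<subseteq> {e\<in>edges_of (vertices_seeing c1). chi e = c0}"
  shows "card {b\<in>A. z \<in> with_partners c1 b} \<le> (q + 1) * (q + 2)"
proof -
  have A: "A \<subseteq> {e\<in>edges_of {..<n}. chi e = c0}"
    using assms(3) edges_of_mono[OF vertices_seeing_subset] by blast
  have "{b\<in>A. z \<in> with_partners c1 b}
      \<subseteq> incident_edges z c0 \<union> (\<Union>w\<in>colour_nbhd z c1. incident_edges w c0)"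
  proof
    fix b assume b: "b \<in> {b\<in>A. z \<in> with_partners c1 b}"
    then have "b \<in> edges_of {..<n}" "chi b = c0" using A by auto
    consider "z \<in> b" | w where "w \<in> b" "z = partner c1 w"
      using b unfolding with_partners_def by blast
    then show "b \<in> incident_edges z c0 \<union> (\<Union>w\<in>colour_nbhd z c1. incident_edges w c0)"
    proof cases
      case 1
      then show ?thesis using \<open>b \<in> edges_of {..<n}\<close> \<open>chi b = c0\<close> by (simp add: incident_edges_def)
    next
      case (2 w)
      then have "w \<in> vertices_seeing c1" using b assms(3) by (auto simp: edges_of_def)
      then have "w \<in> colour_nbhd z c1"
        using partner[of w c1] 2 vertices_seeing_subset
        by (auto simp: colour_nbhd_def insert_commute)
      then show ?thesis
        using 2 \<open>b \<in> edges_of {..<n}\<close> \<open>chi b = c0\<close> by (auto simp: incident_edges_def)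
    qed
  qed
  then have "card {b\<in>A. z \<in> with_partners c1 b}
      \<le> card (incident_edges z c0 \<union> (\<Union>w\<in>colour_nbhd z c1. incident_edges w c0))"
    by (intro card_mono) auto
  also have "\<dots> \<le> card (incident_edges z c0) + card (\<Union>w\<in>colour_nbhd z c1. incident_edges w c0)"
    by (rule card_Un_le)
  also have "\<dots> \<le> (q + 1) + (q + 1) * (q + 1)"
  proof (rule add_mono)
    show "card (incident_edges z c0) \<le> q + 1"
      by (rule card_incident_edges_le[OF assms(1,2)])
    have "card (\<Union>w\<in>colour_nbhd z c1. incident_edges w c0)
        \<le> (\<Sum>w\<in>colour_nbhd z c1. card (incident_edges w c0))"
      by (rule card_UN_le) simp
    also have "\<dots> \<le> (\<Sum>w\<in>colour_nbhd z c1. q + 1)"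
      using assms(1) by (intro sum_mono card_incident_edges_le) (auto simp: colour_nbhd_def)
    also have "\<dots> = card (colour_nbhd z c1) * (q + 1)" by simp
    also have "\<dots> \<le> (q + 1) * (q + 1)"
      using card_colour_nbhd_le[OF assms(1,2), of c1] by (rule mult_right_mono) simp
    finally show "card (\<Union>w\<in>colour_nbhd z c1. incident_edges w c0) \<le> (q + 1) * (q + 1)" .
  qed
  finally show ?thesis by (simp add: algebra_simps)
qed

lemma card_conflicting_edges_le:
  assumes "q + 3 \<le> k" "A \<subseteq> {e\<in>edges_of (vertices_seeing c1). chi e = c0}" "a \<in> A"
  shows "card {b\<in>A. with_partners c1 a \<inter> with_partners c1 b \<noteq> {}} \<le> 4 * ((q + 1) * (q + 2))"
proof -
  have a: "a \<subseteq> vertices_seeing c1" "card a = 2"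
    using assms(2,3) by (auto simp: edges_of_def)
  then have "finite a" by (auto intro: card_ge_0_finite)
  have sub: "with_partners c1 a \<subseteq> {..<n}"
    using a(1) partner(1) vertices_seeing_subset unfolding with_partners_def by blast
  have "card (with_partners c1 a) \<le> card a + card (partner c1 ` a)"
    unfolding with_partners_def by (rule card_Un_le)
  also have "\<dots> \<le> 4" using card_image_le[OF \<open>finite a\<close>, of "partner c1"] a(2) by simp
  finally have card_wp: "card (with_partners c1 a) \<le> 4" .
  have fin: "finite (with_partners c1 a)" using \<open>finite a\<close> by (simp add: with_partners_def)
  have "card {b\<in>A. with_partners c1 a \<inter> with_partners c1 b \<noteq> {}}
      \<le> card (\<Union>z\<in>with_partners c1 a. {b\<in>A. z \<in> with_partners c1 b})"
    using fin finite_subset[OF assms(2)] finite_edges_of[of "vertices_seeing c1"]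
    by (intro card_mono) (auto simp: vertices_seeing_def)
  also have "\<dots> \<le> (\<Sum>z\<in>with_partners c1 a. card {b\<in>A. z \<in> with_partners c1 b})"
    by (rule card_UN_le[OF fin])
  also have "\<dots> \<le> (\<Sum>z\<in>with_partners c1 a. (q + 1) * (q + 2))"
    using sub by (intro sum_mono card_with_partners_containing_le[OF assms(1) _ assms(2)]) auto
  also have "\<dots> = card (with_partners c1 a) * ((q + 1) * (q + 2))" by simp
  also have "\<dots> \<le> 4 * ((q + 1) * (q + 2))"
    using card_wp by (rule mult_right_mono) simp
  finally show ?thesis .
qed

lemma partnered_matching_if_pairwise_disjnt_with_partners:
  assumes "c0 \<noteq> c1" "T \<subseteq> {e\<in>edges_of (vertices_seeing c1). chi e = c0}"
    and disj: "pairwise (\<lambda>a b. disjnt (with_partners c1 a) (with_partners c1 b)) T"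
  shows "partnered_matching T c0 c1 (partner c1)"
  unfolding partnered_matching_def
proof (intro conjI)
  have in_wp: "e \<subseteq> with_partners c1 e" "partner c1 ` e \<subseteq> with_partners c1 e" for e
    by (auto simp: with_partners_def)
  have edge: "e \<in> edges_of (vertices_seeing c1)" "chi e = c0" if "e \<in> T" for e
    using assms(2) that by auto
  show "T \<subseteq> edges_of {..<n}"
    using edge(1) edges_of_mono[OF vertices_seeing_subset] by blast
  show "pairwise disjnt T"
    using disj by (rule pairwise_mono) (auto simp: disjnt_def with_partners_def)
  show "chi ` T \<subseteq> {c0}" using edge(2) by blast
  show "\<forall>u\<in>\<Union>T. partner c1 u < n \<and> partner c1 u \<notin> \<Union>T \<and> chi {u, partner c1 u} = c1"
  proof
    fix u assume "u \<in> \<Union>T"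
    then obtain e where e: "e \<in> T" "u \<in> e" by blast
    then obtain y where y: "y \<noteq> u" "e = {u, y}"
      using edge(1) by (blast elim: in_edges_ofE)
    have "u \<in> vertices_seeing c1" using edge(1)[OF e(1)] e(2) by (auto simp: edges_of_def)
    note p = partner[OF this]
    have "partner c1 u \<notin> e'" if "e' \<in> T" for e'
    proof (cases "e' = e")
      case True
      have "chi {u, partner c1 u} \<noteq> chi e" using p(3) edge(2)[OF e(1)] assms(1) by simp
      then show ?thesis using True y(2) p(2) by auto
    next
      case False
      then have "disjnt (with_partners c1 e) (with_partners c1 e')"
        using disj e(1) that by (auto simp: pairwise_def)
      then show ?thesis using e(2) in_wp unfolding disjnt_def by blast
    qed
    with p show "partner c1 u < n \<and> partner c1 u \<notin> \<Union>T \<and> chi {u, partner c1 u} = c1"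
      by blast
  qed
qed

lemma obtain_partnered_matching:
  assumes "q + 3 \<le> k" "c0 \<noteq> c1"
    and many: "j * (4 * ((q + 1) * (q + 2)) + 1) \<le> card {e\<in>edges_of (vertices_seeing c1). chi e = c0}"
  obtains T where "card T = j" "partnered_matching T c0 c1 (partner c1)"
proof -
  define A where "A = {e\<in>edges_of (vertices_seeing c1). chi e = c0}"
  define conflict where "conflict a b \<longleftrightarrow> \<not> disjnt (with_partners c1 a) (with_partners c1 b)" for a b
  have A_sub: "A \<subseteq> {e\<in>edges_of (vertices_seeing c1). chi e = c0}" by (simp add: A_def)
  have "finite A"
    using finite_subset[OF vertices_seeing_subset] by (simp add: A_def finite_edges_of)
  moreover have "conflict b a" if "conflict a b" for a b
    using that unfolding conflict_def by (auto simp: disjnt_def)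
  moreover have "card {b\<in>A. conflict a b} \<le> 4 * ((q + 1) * (q + 2))" if "a \<in> A" for a
    unfolding conflict_def disjnt_def by (rule card_conflicting_edges_le[OF assms(1) A_sub that])
  ultimately obtain T where T: "T \<subseteq> A" "card T = j" "pairwise (\<lambda>a b. \<not> conflict a b) T"
    using exists_independent_subset[of A conflict _ j] many[folded A_def] by blast
  from T(3) have "partnered_matching T c0 c1 (partner c1)"
    unfolding conflict_def
    by (intro partnered_matching_if_pairwise_disjnt_with_partners assms(2) T(1)[unfolded A_def]) simp
  with T(2) show ?thesis by (rule that)
qed

lemma card_colour_class_in_vertices_seeing_less:
  assumes "q + 3 \<le> 3 * t" "4 * t \<le> k" "c0 \<noteq> c1"
  shows "card {e\<in>edges_of (vertices_seeing c1). chi e = c0} < t * (4 * ((q + 1) * (q + 2)) + 1)"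
proof (rule ccontr)
  have "q + 3 \<le> k" using assms(1,2) by linarith
  assume "\<not> ?thesis"
  then have "t * (4 * ((q + 1) * (q + 2)) + 1) \<le> card {e\<in>edges_of (vertices_seeing c1). chi e = c0}"
    by simp
  then obtain T where "card T = t" "partnered_matching T c0 c1 (partner c1)"
    by (rule obtain_partnered_matching[OF \<open>q + 3 \<le> k\<close> assms(3)])
  then have "3 * t \<le> q + 2" using partnered_matching_card_le assms(2) by blast
  with assms(1) show False by linarith
qed

lemma edges_of_subset_incident_Un_colour_classes:
  assumes "W \<subseteq> {..<n}"
  shows "edges_of W \<subseteq> (\<Union>x\<in>W. incident_edges x c) \<union> (\<Union>c'\<in>colours - {c}. {e\<in>edges_of W. chi e = c'})"
proof
  fix e assume e: "e \<in> edges_of W"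
  then have "e \<in> edges_of {..<n}" using edges_of_mono[OF assms] by blast
  show "e \<in> (\<Union>x\<in>W. incident_edges x c) \<union> (\<Union>c'\<in>colours - {c}. {e\<in>edges_of W. chi e = c'})"
  proof (cases "chi e = c")
    case True
    obtain x where "x \<in> e" using e by (auto simp: edges_of_def card_2_iff)
    then show ?thesis
      using True e \<open>e \<in> edges_of {..<n}\<close> by (auto simp: incident_edges_def edges_of_def)
  next
    case False
    then show ?thesis using e \<open>e \<in> edges_of {..<n}\<close> by (auto simp: colours_def)
  qed
qed

lemma card_vertices_seeing_choose_two_le:
  assumes "q + 3 \<le> 3 * t" "4 * t \<le> k"
  shows "card (vertices_seeing c1) choose 2
    \<le> t * (4 * ((q + 1) * (q + 2)) + 1) * card colours + (q + 1) * card (vertices_seeing c1)"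
proof -
  define W where "W = vertices_seeing c1"
  define B where "B = t * (4 * ((q + 1) * (q + 2)) + 1)"
  have "q + 3 \<le> k" using assms by linarith
  have "finite W" using finite_subset[OF vertices_seeing_subset] by (simp add: W_def)
  have "edges_of W \<subseteq> (\<Union>x\<in>W. incident_edges x c1) \<union> (\<Union>c\<in>colours - {c1}. {e\<in>edges_of W. chi e = c})"
    using vertices_seeing_subset unfolding W_def by (rule edges_of_subset_incident_Un_colour_classes)
  then have "card W choose 2
      \<le> card ((\<Union>x\<in>W. incident_edges x c1) \<union> (\<Union>c\<in>colours - {c1}. {e\<in>edges_of W. chi e = c}))"
    using \<open>finite W\<close> by (simp add: card_edges_of[symmetric] card_mono finite_edges_of)
  also have "\<dots> \<le> card (\<Union>x\<in>W. incident_edges x c1) + card (\<Union>c\<in>colours - {c1}. {e\<in>edges_of W. chi e = c})"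
    by (rule card_Un_le)
  also have "\<dots> \<le> (q + 1) * card W + B * card colours"
  proof (rule add_mono)
    have "card (\<Union>x\<in>W. incident_edges x c1) \<le> (\<Sum>x\<in>W. card (incident_edges x c1))"
      by (rule card_UN_le[OF \<open>finite W\<close>])
    also have "\<dots> \<le> (\<Sum>x\<in>W. q + 1)"
      using vertices_seeing_subset \<open>q + 3 \<le> k\<close>
      by (intro sum_mono card_incident_edges_le) (auto simp: W_def)
    finally show "card (\<Union>x\<in>W. incident_edges x c1) \<le> (q + 1) * card W"
      by (simp add: algebra_simps)
    have "card (\<Union>c\<in>colours - {c1}. {e\<in>edges_of W. chi e = c})
        \<le> (\<Sum>c\<in>colours - {c1}. card {e\<in>edges_of W. chi e = c})"
      by (rule card_UN_le) simp
    also have "\<dots> \<le> (\<Sum>c\<in>colours - {c1}. B)"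
      using card_colour_class_in_vertices_seeing_less[OF assms]
      by (intro sum_mono) (auto simp: W_def B_def less_imp_le)
    also have "\<dots> \<le> B * card colours"
      by (simp add: card_Diff1_le mult.commute)
    finally show "card (\<Union>c\<in>colours - {c1}. {e\<in>edges_of W. chi e = c}) \<le> B * card colours" .
  qed
  finally show ?thesis by (simp add: W_def B_def)
qed

lemma fourth_power_le_card_colours_cube:
  assumes "q + 3 \<le> 3 * t" "4 * t \<le> k"
  shows "n ^ 4 \<le> 4 * (q + 1)\<^sup>2 * (4 * (t * (4 * ((q + 1) * (q + 2)) + 1)) + (2 * (q + 1) + 1)\<^sup>2)
    * card colours ^ 3"
proof -
  have "q + 3 \<le> k" using assms by linarith
  obtain c where "c \<in> colours"
    and popular: "n * (n - 1) \<le> (q + 1) * card colours * card (vertices_seeing c)"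
    using obtain_popular_colour[OF \<open>q + 3 \<le> k\<close>] by blast
  have "2 \<le> n" using \<open>q + 3 \<le> k\<close> k_le_n by linarith
  moreover have "0 < card colours" using \<open>c \<in> colours\<close> finite_colours card_gt_0_iff by blast
  then have "1 \<le> card colours" by simp
  ultimately show ?thesis
    by (rule fourth_power_le_cube[OF popular card_vertices_seeing_choose_two_le[OF assms]])
qed

end

lemma powr_four_thirds_le:
  fixes x y C :: real
  assumes "0 < x" "0 \<le> y" "0 < C" "x ^ 4 \<le> C * y ^ 3"
  shows "x powr (4/3) \<le> C powr (1/3) * y"
proof -
  have "(x powr (4/3)) ^ 3 = x ^ 4"
    using assms(1) by (simp add: powr_power)
  also have "\<dots> \<le> C * y ^ 3" by (rule assms(4))
  also have "\<dots> = (C powr (1/3) * y) ^ 3"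
    using assms(3) by (simp add: power_mult_distrib powr_power)
  finally show ?thesis using assms(2) by simp
qed

lemma obtain_fourth_power_le_f_cube:
  assumes "q + 3 \<le> 3 * t" "4 * t \<le> k"
  obtains C :: nat where "0 < C" "\<And>n. k \<le> n \<Longrightarrow> n ^ 4 \<le> C * f n k ((k choose 2) - q) ^ 3"
proof
  define C :: nat where
    "C = 4 * (q + 1)\<^sup>2 * (4 * (t * (4 * ((q + 1) * (q + 2)) + 1)) + (2 * (q + 1) + 1)\<^sup>2)"
  show "0 < C" by (simp add: C_def)
  fix n assume "k \<le> n"
  obtain chi where chi: "good_colouring n k ((k choose 2) - q) chi"
    "card (chi ` edges_of {..<n}) = f n k ((k choose 2) - q)"
    using f_attained[OF good_colouring_set_encode] by (metis diff_le_self)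
  interpret few_repeats_colouring n k q chi
    by unfold_locales (use chi(1) \<open>k \<le> n\<close> in auto)
  show "n ^ 4 \<le> C * f n k ((k choose 2) - q) ^ 3"
    using fourth_power_le_card_colours_cube[OF assms] chi(2) by (simp add: C_def colours_def)
qed

theorem f_few_repeats_bigomega:
  assumes "q + 3 \<le> 3 * t" "4 * t \<le> k"
  shows "(\<lambda>n. real (f n k ((k choose 2) - q))) \<in> \<Omega>(\<lambda>n. real n powr (4/3))"
proof -
  obtain C where "0 < C" and bound: "\<And>n. k \<le> n \<Longrightarrow> n ^ 4 \<le> C * f n k ((k choose 2) - q) ^ 3"
    using obtain_fourth_power_le_f_cube[OF assms] by blast
  have lower: "real n powr (4/3) / real C powr (1/3) \<le> real (f n k ((k choose 2) - q))"
    if "k \<le> n" for n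
  proof -
    have "real (n ^ 4) \<le> real (C * f n k ((k choose 2) - q) ^ 3)"
      using bound[OF that] by (simp only: of_nat_le_iff)
    moreover have "0 < real n" using that assms by linarith
    ultimately have "real n powr (4/3) \<le> real C powr (1/3) * real (f n k ((k choose 2) - q))"
      using \<open>0 < C\<close> by (intro powr_four_thirds_le) auto
    then show ?thesis using \<open>0 < C\<close> by (simp add: pos_divide_le_eq mult.commute)
  qed
  have "\<forall>\<^sub>F n in at_top. 1 / real C powr (1/3) * norm (real n powr (4/3))
      \<le> norm (real (f n k ((k choose 2) - q)))"
    using eventually_ge_at_top[of k]
  proof eventually_elim
    case (elim n)
    then show ?case using lower[OF elim] by simp
  qed
  then show ?thesis using \<open>0 < C\<close> by (intro landau_omega.bigI[of "1 / real C powr (1/3)"]) auto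
qed

theorem theorem1p3:
  shows "(\<lambda>n. real (f n 24 ((24 choose 2) - 15))) \<in> \<Omega>(\<lambda>n. real n powr (9/8))"
proof -
  have "(\<lambda>n. real n powr (9/8)) \<in> O(\<lambda>n. real n powr (4/3))" by real_asymp
  moreover have "(\<lambda>n. real n powr (4/3)) \<in> O(\<lambda>n. real (f n 24 ((24 choose 2) - 15)))"
    using f_few_repeats_bigomega[of 15 6 24] by (simp add: bigomega_iff_bigo)
  ultimately show ?thesis unfolding bigomega_iff_bigo by (rule landau_o.big_trans)
qed

end
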